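(* A general ring $I$ is strongly regular if and only if $I$ is quasipolar and $QN(I)=\{0\}$.
   Context: A general ring is an associative ring not necessarily having an identity. For $p,q\in I$, $p*q=p+q-pq$; $Q(I)=\{q\in I\mid p*q=0=q*p \text{ for some } p\in I\}$; $\mathrm{comm}(a)=\{x\in I\mid xa=ax\}$, $\mathrm{comm}^2(a)=\{x\in I\mid xy=yx\text{ for all }y\in\mathrm{comm}(a)\}$; $QN(I)=\{q\in I\mid qx\in Q(I)\text{ for every }x\in\mathrm{comm}(q)\}$. An element $a\in I$ is quasipolar in $I$ if there is an idempotent $p=p^2\in\mathrm{comm}^2(a)$ with $a+p\in Q(I)$ and $a-ap\in QN(I)$; $I$ is quasipolar if every element is. An element $a$ is strongly regular if $a=aba$ for some $b\in I$ with $ab=ba$; $I$ is strongly regular if every element is. *)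

theory Defs
  imports Main
begin

text \<open>General (possibly non-unital) associative rings are modelled by the type class ring.
  All notions below are relative to the whole ring, i.e. the type.\<close>

definition circ_op :: "'a::ring \<Rightarrow> 'a \<Rightarrow> 'a" (infixl "\<star>" 70) where
  "p \<star> q = p + q - p * q"

definition Qset :: "'a::ring set" where
  "Qset = {q. \<exists>p. p \<star> q = 0 \<and> q \<star> p = 0}"

definition comm :: "'a::ring \<Rightarrow> 'a set" where
  "comm a = {x. x * a = a * x}"

definition comm2 :: "'a::ring \<Rightarrow> 'a set" where
  "comm2 a = {x. \<forall>y\<in>comm a. x * y = y * x}"

definition QNset :: "'a::ring set" where
  "QNset = {q. \<forall>x\<in>comm q. q * x \<in> Qset}"

definition quasipolar_elem :: "'a::ring \<Rightarrow> bool" where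
  "quasipolar_elem a \<longleftrightarrow>
     (\<exists>p. p * p = p \<and> p \<in> comm2 a \<and> a + p \<in> Qset \<and> a - a * p \<in> QNset)"

definition quasipolar_ring :: "'a::ring itself \<Rightarrow> bool" where
  "quasipolar_ring _ \<longleftrightarrow> (\<forall>a::'a. quasipolar_elem a)"

definition strongly_regular_elem :: "'a::ring \<Rightarrow> bool" where
  "strongly_regular_elem a \<longleftrightarrow> (\<exists>b. a = a * b * a \<and> a * b = b * a)"

definition strongly_regular_ring :: "'a::ring itself \<Rightarrow> bool" where
  "strongly_regular_ring _ \<longleftrightarrow> (\<forall>a::'a. strongly_regular_elem a)"

end

theory Submission
  imports Defs
begin

text \<open>A strongly regular element a = aba (ab = ba) has a commuting inner inverse c = bab with
  cac = c; then e = ac is an idempotent in the double commutant of a with ae = a, and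
  e + c is a quasi-inverse of a + e, so a is quasipolar with a - ae = 0. Conversely, if
  QN(I) = 0 then quasipolarity forces ap = pa = a, and writing r for the quasi-inverse of
  a + p one checks that r - p is a commuting inner inverse of a. Finally, a strongly regular
  q in QN(I) is zero, because qb is then an idempotent lying in Q(I), and the only such
  idempotent is 0.\<close>

lemma Qset_iff: "q \<in> Qset \<longleftrightarrow> (\<exists>p. p + q - p * q = 0 \<and> q + p - q * p = 0)"
  unfolding Qset_def circ_op_def by simp

lemma zero_mem_Qset: "(0::'a::ring) \<in> Qset"
  unfolding Qset_iff by (intro exI[of _ 0]) simp

lemma zero_mem_QNset: "(0::'a::ring) \<in> QNset"
  unfolding QNset_def using zero_mem_Qset by auto

lemma idempotent_mem_Qset_eq_zero:
  fixes e :: "'a::ring"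
  assumes idem: "e * e = e" and "e \<in> Qset"
  shows "e = 0"
proof -
  from \<open>e \<in> Qset\<close> obtain p where "p + e - p * e = 0"
    unfolding Qset_iff by blast
  then have "(p + e - p * e) * e = 0" by simp
  then have "p * e + e * e - p * (e * e) = 0" by (simp add: algebra_simps)
  with idem show ?thesis by simp
qed

lemma strongly_regular_mem_QNset_eq_zero:
  fixes q :: "'a::ring"
  assumes "strongly_regular_elem q" and "q \<in> QNset"
  shows "q = 0"
proof -
  from assms(1) obtain b where b: "q = q * b * q" "q * b = b * q"
    unfolding strongly_regular_elem_def by blast
  then have "b \<in> comm q" unfolding comm_def by simp
  with \<open>q \<in> QNset\<close> have "q * b \<in> Qset" unfolding QNset_def by blast
  moreover have "(q * b) * (q * b) = q * b"
    using b(1) by (metis mult.assoc)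
  ultimately have "q * b = 0" using idempotent_mem_Qset_eq_zero by blast
  with b(1) show ?thesis by simp
qed

lemma strongly_regular_elem_obtains_group_inverse:
  fixes a :: "'a::ring"
  assumes "strongly_regular_elem a"
  obtains c where "a * c = c * a" "a * c * a = a" "c * a * c = c"
proof -
  from assms obtain b where b: "a = a * b * a" "a * b = b * a"
    unfolding strongly_regular_elem_def by blast
  define c where "c = b * a * b"
  have ac: "a * c = a * b" and ca: "c * a = a * b"
    unfolding c_def using b by (metis mult.assoc)+
  have "c * a * c = b * (a * b * a) * b * a * b" unfolding c_def by (simp add: mult.assoc)
  also have "\<dots> = b * (a * b * a) * b" using b(1) by (simp add: mult.assoc)
  also have "\<dots> = c" using b(1) unfolding c_def by simp
  finally have "c * a * c = c" .
  with ac ca b(1) show thesis using that[of c] by simp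
qed

lemma commuting_inner_inverse_mult_mem_comm2:
  fixes a c :: "'a::ring"
  assumes comm_ac: "a * c = c * a" and aca: "a * c * a = a"
  shows "a * c \<in> comm2 a"
  unfolding comm2_def comm_def
proof (intro CollectI ballI)
  fix y assume "y \<in> {x. x * a = a * x}"
  then have y: "y * a = a * y" by simp
  have "a * c * y = c * y * (a * c * a)" using aca comm_ac y by (metis mult.assoc)
  also have "\<dots> = a * c * y * (a * c)" using comm_ac y by (metis mult.assoc)
  finally have left: "a * c * y = a * c * y * (a * c)" .
  have "y * (a * c) = (a * c * a) * y * c" using aca y by (metis mult.assoc)
  also have "\<dots> = a * c * y * (a * c)" using y by (metis mult.assoc)
  finally show "a * c * y = y * (a * c)" using left by simp
qed

lemma strongly_regular_elem_imp_quasipolar_elem: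
  fixes a :: "'a::ring"
  assumes "strongly_regular_elem a"
  shows "quasipolar_elem a"
proof -
  obtain c where comm_ac: "a * c = c * a" and aca: "a * c * a = a" and cac: "c * a * c = c"
    using strongly_regular_elem_obtains_group_inverse assms by blast
  define e where "e = a * c"
  have ee: "e * e = e" unfolding e_def using aca by (simp add: mult.assoc[symmetric])
  have ae: "a * e = a" and ea: "e * a = a"
    unfolding e_def using aca comm_ac by (metis mult.assoc)+
  have ce: "c * e = c" and ec: "e * c = c"
    unfolding e_def using cac comm_ac by (metis mult.assoc)+
  have ca: "c * a = e" unfolding e_def using comm_ac by simp
  have "a + e \<in> Qset"
    unfolding Qset_iff
  proof (intro exI conjI)
    show "(e + c) + (a + e) - (e + c) * (a + e) = 0"
      using ea ee ca ce by (simp add: algebra_simps)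
    show "(a + e) + (e + c) - (a + e) * (e + c) = 0"
      using ae ee ec by (simp add: algebra_simps e_def)
  qed
  moreover have "e \<in> comm2 a"
    unfolding e_def using commuting_inner_inverse_mult_mem_comm2 comm_ac aca by blast
  ultimately show ?thesis
    unfolding quasipolar_elem_def using ee ae zero_mem_QNset by auto
qed

lemma strongly_regular_if_idempotent_unit_plus_mem_Qset:
  fixes a p :: "'a::ring"
  assumes pp: "p * p = p" and ap: "a * p = a" and pa: "p * a = a" and "a + p \<in> Qset"
  shows "strongly_regular_elem a"
proof -
  from \<open>a + p \<in> Qset\<close> obtain r
    where "r + (a + p) - r * (a + p) = 0" "(a + p) + r - (a + p) * r = 0"
    unfolding Qset_iff by blast
  then have rs: "r * (a + p) = r + (a + p)" and sr: "(a + p) * r = r + (a + p)"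
    by (simp_all add: algebra_simps)
  have sp: "(a + p) * p = a + p" and ps: "p * (a + p) = a + p"
    using ap pa pp by (simp_all add: algebra_simps)
  have "r * p + (a + p) = r * (a + p)"
    using arg_cong[OF rs, of "\<lambda>x. x * p"] sp by (simp add: mult.assoc distrib_right)
  with rs have rp: "r * p = r" by simp
  have "p * r + (a + p) = (a + p) * r"
    using arg_cong[OF sr, of "\<lambda>x. p * x"] ps by (simp add: mult.assoc[symmetric] distrib_left)
  with sr have pr: "p * r = r" by simp
  have "a * (r - p) = p" and "(r - p) * a = p"
    using rs sr rp pr ap pa by (simp_all add: algebra_simps)
  then show ?thesis unfolding strongly_regular_elem_def
    by (intro exI[of _ "r - p"]) (simp add: pa)
qed

lemma quasipolar_elem_imp_strongly_regular_elem:
  fixes a :: "'a::ring"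
  assumes "quasipolar_elem a" and QN: "(QNset :: 'a set) = {0}"
  shows "strongly_regular_elem a"
proof -
  from assms(1) obtain p where p: "p * p = p" "p \<in> comm2 a" "a + p \<in> Qset" "a - a * p \<in> QNset"
    unfolding quasipolar_elem_def by blast
  from p(4) QN have "a - a * p = 0" by blast
  then have ap: "a * p = a" by simp
  have "a \<in> comm a" unfolding comm_def by simp
  with p(2) ap have pa: "p * a = a" unfolding comm2_def by auto
  show ?thesis
    using strongly_regular_if_idempotent_unit_plus_mem_Qset p(1,3) ap pa by blast
qed

theorem proposition2p18:
  "strongly_regular_ring TYPE('a::ring) \<longleftrightarrow>
     (quasipolar_ring TYPE('a) \<and> (QNset :: 'a set) = {0})"
proof
  assume "strongly_regular_ring TYPE('a::ring)"
  then have sr: "\<And>x::'a. strongly_regular_elem x" unfolding strongly_regular_ring_def by blast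
  then have "quasipolar_ring TYPE('a)"
    unfolding quasipolar_ring_def using strongly_regular_elem_imp_quasipolar_elem by blast
  moreover have "(QNset :: 'a set) = {0}"
    using sr strongly_regular_mem_QNset_eq_zero zero_mem_QNset by blast
  ultimately show "quasipolar_ring TYPE('a) \<and> (QNset :: 'a set) = {0}" ..
next
  assume "quasipolar_ring TYPE('a) \<and> (QNset :: 'a set) = {0}"
  then show "strongly_regular_ring TYPE('a::ring)"
    unfolding strongly_regular_ring_def quasipolar_ring_def
    using quasipolar_elem_imp_strongly_regular_elem by blast
qed

end
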